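(* Let $(M,g,J)$ be almost Hermitian of even complex dimension $m=2n$, $n\geq1$, with complex spinor bundle $S^cM$ of a spin$^c$ structure, and let $\mathcal{V}=S_{n-1}\oplus S_n$. Then Clifford multiplication with $\Lambda^{1,1}M$-forms on $\mathcal{V}$ is injective: if $x\in M$, $\eta\in\Lambda^{1,1}_xM$ and $\gamma(\eta)\varphi=0$ for all $\varphi\in\mathcal{V}_x$, then $\eta=0$.
   Context: $\Omega=g(\cdot,J\cdot)$; $\gamma$ is Clifford multiplication; $S^cM=S_0\oplus\cdots\oplus S_m$ with $S_j$ the eigenbundle of $\gamma(\Omega)$ for eigenvalue $\mathbf{i}(m-2j)$. $\Lambda^{1,1}M$ denotes the bundle of real $J$-invariant $2$-forms. *)

theory Defs
  imports "HOL-Analysis.Analysis"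
begin

text \<open>The tangent space T_xM is a real Euclidean
space 'v (metric g = inner product); J is the almost complex structure at x.
The spinor space S^c_xM is the complex vector space complex^'k on which tangent
vectors act by Clifford multiplication gamma, an irreducible complex
representation of the Clifford algebra of (T_xM, g).\<close>

definition almost_hermitian :: "('v::euclidean_space \<Rightarrow> 'v) \<Rightarrow> bool" where
  "almost_hermitian J \<longleftrightarrow> linear J \<and> (\<forall>v. J (J v) = - v) \<and>
     (\<forall>u v. inner (J u) (J v) = inner u v)"

definition clifford_rep :: "('v::euclidean_space \<Rightarrow> complex^'k^'k) \<Rightarrow> bool" where
  "clifford_rep \<gamma> \<longleftrightarrow>
     (\<forall>u v. \<gamma> (u + v) = \<gamma> u + \<gamma> v) \<and>
     (\<forall>r v. \<gamma> (r *\<^sub>R v) = mat (complex_of_real r) ** \<gamma> v) \<and>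
     (\<forall>v. \<gamma> v ** \<gamma> v = mat (- complex_of_real ((norm v)\<^sup>2)))"

definition csubspace :: "(complex^'k) set \<Rightarrow> bool" where
  "csubspace W \<longleftrightarrow> 0 \<in> W \<and> (\<forall>x\<in>W. \<forall>y\<in>W. x + y \<in> W) \<and> (\<forall>c. \<forall>x\<in>W. c *s x \<in> W)"

definition irreducible_rep :: "('v \<Rightarrow> complex^'k^'k) \<Rightarrow> bool" where
  "irreducible_rep \<gamma> \<longleftrightarrow>
     (\<forall>W. csubspace W \<and> (\<forall>v. \<forall>x\<in>W. \<gamma> v *v x \<in> W) \<longrightarrow> W = {0} \<or> W = UNIV)"

definition spinor_rep :: "('v::euclidean_space \<Rightarrow> complex^'k^'k) \<Rightarrow> bool" where
  "spinor_rep \<gamma> \<longleftrightarrow> clifford_rep \<gamma> \<and> irreducible_rep \<gamma>"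

definition two_form :: "('v::euclidean_space \<Rightarrow> 'v \<Rightarrow> real) \<Rightarrow> bool" where
  "two_form \<eta> \<longleftrightarrow> (\<forall>u. linear (\<eta> u)) \<and> (\<forall>v. linear (\<lambda>u. \<eta> u v)) \<and> (\<forall>u v. \<eta> u v = - \<eta> v u)"

definition form11 :: "('v::euclidean_space \<Rightarrow> 'v) \<Rightarrow> ('v \<Rightarrow> 'v \<Rightarrow> real) \<Rightarrow> bool" where
  "form11 J \<eta> \<longleftrightarrow> two_form \<eta> \<and> (\<forall>u v. \<eta> (J u) (J v) = \<eta> u v)"

text \<open>Clifford multiplication with a 2-form: sum_{i<j} eta(e_i,e_j) e_i e_j over an
orthonormal basis, written as half the double sum (eta antisymmetric).\<close>
definition cliff2 :: "('v::euclidean_space \<Rightarrow> complex^'k^'k) \<Rightarrow> ('v \<Rightarrow> 'v \<Rightarrow> real) \<Rightarrow> complex^'k^'k" where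
  "cliff2 \<gamma> \<eta> = (\<Sum>b\<in>Basis. \<Sum>c\<in>Basis.
      mat (complex_of_real (\<eta> b c / 2)) ** (\<gamma> b ** \<gamma> c))"

definition kaehler_form :: "('v::euclidean_space \<Rightarrow> 'v) \<Rightarrow> 'v \<Rightarrow> 'v \<Rightarrow> real" where
  "kaehler_form J u v = inner u (J v)"

definition spinor_S :: "('v::euclidean_space \<Rightarrow> complex^'k^'k) \<Rightarrow> ('v \<Rightarrow> 'v) \<Rightarrow> nat \<Rightarrow> nat \<Rightarrow> (complex^'k) set" where
  "spinor_S \<gamma> J m j = {\<phi>. cliff2 \<gamma> (kaehler_form J) *v \<phi> =
        (\<i> * of_int (int m - 2 * int j)) *s \<phi>}"

end

theory Submission
  imports Defs
begin

text \<open>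
  Choose a unitary frame \<open>f\<^sub>1, \<dots>, f\<^sub>m\<close> (\<open>m = 2n\<close>), so that the \<open>f\<^sub>i, J f\<^sub>i\<close> form an
  orthonormal basis.  The operators \<open>T\<^sub>i = \<gamma>(f\<^sub>i)\<gamma>(J f\<^sub>i)\<close> square to \<open>-1\<close> and commute, and
  \<open>\<gamma>(f\<^sub>i)\<close> flips the sign of \<open>T\<^sub>i\<close> while commuting with the other \<open>T\<^sub>j\<close>; hence every sign
  pattern \<open>\<sigma> \<in> {\<i>, -\<i>}\<^sup>m\<close> is a joint eigenvalue.  Since \<open>\<gamma>(\<Omega>) = -\<Sigma> T\<^sub>i\<close>, a joint
  eigenvector with \<open>j\<close> entries \<open>\<i>\<close> lies in \<open>S\<^sub>j\<close>.

  Expanding \<open>\<gamma>(\<eta>)\<close> in the frame, the operator \<open>(T\<^sub>k - \<sigma>\<^sub>k)(T\<^sub>l - \<sigma>\<^sub>l)\<close> isolates the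
  \<open>(k, l)\<close>-block of \<open>\<gamma>(\<eta>)\<psi>\<close>.  If \<open>\<sigma>\<^sub>k = \<i>\<close> and \<open>\<sigma>\<^sub>l = -\<i>\<close>, this block is
  \<open>(\<eta>(f\<^sub>k, f\<^sub>l) + \<i> \<eta>(f\<^sub>k, J f\<^sub>l)) \<gamma>(f\<^sub>k)\<gamma>(f\<^sub>l)\<psi>\<close>; taking \<open>\<psi> \<in> S\<^sub>n\<close> shows that the
  off-diagonal part of \<open>\<eta>\<close> vanishes.
  Then \<open>\<gamma>(\<eta>)\<psi> = (\<Sigma> \<sigma>\<^sub>i \<eta>(f\<^sub>i, J f\<^sub>i)) \<psi>\<close>, and its vanishing for all patterns with \<open>n\<close>
  and \<open>n - 1\<close> entries \<open>\<i>\<close> forces every \<open>\<eta>(f\<^sub>i, J f\<^sub>i)\<close> to be zero.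
\<close>

lemma bilinear_trace_orthonormal_basis:
  fixes h :: "'a::euclidean_space \<Rightarrow> 'a \<Rightarrow> 'b::real_vector"
  assumes h: "bilinear h" and B: "finite B" "pairwise orthogonal B"
    "\<And>x. x \<in> B \<Longrightarrow> norm x = 1" "span B = UNIV"
  shows "(\<Sum>b\<in>Basis. h b b) = (\<Sum>x\<in>B. h x x)"
proof -
  have expand: "h b b = (\<Sum>x\<in>B. \<Sum>y\<in>B. (inner b x * inner b y) *\<^sub>R h x y)" for b
  proof -
    have "b = (\<Sum>x\<in>B. inner b x *\<^sub>R x)"
      using orthonormal_basis_expand[OF B(2,3)] B(1,4) by simp
    then have "h b b = h (\<Sum>x\<in>B. inner b x *\<^sub>R x) (\<Sum>y\<in>B. inner b y *\<^sub>R y)"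
      by simp
    also have "\<dots> = (\<Sum>x\<in>B. \<Sum>y\<in>B. (inner b x * inner b y) *\<^sub>R h x y)"
      by (simp add: bilinear_sum[OF h] sum.cartesian_product bilinear_lmul[OF h]
          bilinear_rmul[OF h] mult.commute)
    finally show ?thesis .
  qed
  have row: "(\<Sum>y\<in>B. inner x y *\<^sub>R h x y) = h x x" if "x \<in> B" for x
  proof -
    have "inner x y *\<^sub>R h x y = (if x = y then h x y else 0)" if "y \<in> B" for y
      using B(2,3) \<open>x \<in> B\<close> that by (auto simp: pairwise_def orthogonal_def norm_eq_1)
    then show ?thesis
      using B(1) that by (simp cong: sum.cong)
  qed
  have "(\<Sum>b\<in>Basis. h b b) = (\<Sum>x\<in>B. \<Sum>y\<in>B. (\<Sum>b\<in>Basis. inner b x * inner b y) *\<^sub>R h x y)"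
    by (simp add: expand scaleR_sum_left sum.swap[of _ Basis])
  also have "\<dots> = (\<Sum>x\<in>B. \<Sum>y\<in>B. inner x y *\<^sub>R h x y)"
    by (simp add: euclidean_inner[symmetric] inner_commute)
  also have "\<dots> = (\<Sum>x\<in>B. h x x)"
    by (simp add: row)
  finally show ?thesis .
qed

lemma bilinear_scaleR_linear:
  fixes f :: "'a::real_vector \<Rightarrow> real" and g :: "'b::real_vector \<Rightarrow> 'c::real_vector"
  assumes f: "linear f" and g: "linear g"
  shows "bilinear (\<lambda>x y. f x *\<^sub>R g y)"
  unfolding bilinear_def
proof (intro allI conjI)
  show "linear (\<lambda>y. f x *\<^sub>R g y)" for x
    using g by (rule linear_compose_scale_right)
  show "linear (\<lambda>x. f x *\<^sub>R g y)" for y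
    by (rule linearI) (simp_all add: linear_add[OF f] linear_scale[OF f] scaleR_add_left)
qed

lemma bilinear_contraction_orthonormal_basis:
  fixes \<beta> :: "'a::euclidean_space \<Rightarrow> 'a \<Rightarrow> real" and \<Phi> :: "'a \<Rightarrow> 'a \<Rightarrow> 'b::real_vector"
  assumes \<beta>: "bilinear \<beta>" and \<Phi>: "bilinear \<Phi>" and B: "finite B" "pairwise orthogonal B"
    "\<And>x. x \<in> B \<Longrightarrow> norm x = 1" "span B = UNIV"
  shows "(\<Sum>b\<in>Basis. \<Sum>c\<in>Basis. \<beta> b c *\<^sub>R \<Phi> b c) = (\<Sum>x\<in>B. \<Sum>y\<in>B. \<beta> x y *\<^sub>R \<Phi> x y)"
proof -
  have lin: "linear (\<beta> x)" "linear (\<lambda>x. \<beta> x y)" "linear (\<Phi> x)" "linear (\<lambda>x. \<Phi> x y)" for x y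
    using \<beta> \<Phi> by (simp_all add: bilinear_def)
  have inner: "(\<Sum>c\<in>Basis. \<beta> b c *\<^sub>R \<Phi> b c) = (\<Sum>y\<in>B. \<beta> b y *\<^sub>R \<Phi> b y)" for b
    using bilinear_trace_orthonormal_basis[OF bilinear_scaleR_linear[OF lin(1,3)] B] .
  have outer: "(\<Sum>b\<in>Basis. \<beta> b y *\<^sub>R \<Phi> b y) = (\<Sum>x\<in>B. \<beta> x y *\<^sub>R \<Phi> x y)" for y
    using bilinear_trace_orthonormal_basis[OF bilinear_scaleR_linear[OF lin(2,4)] B] .
  have "(\<Sum>b\<in>Basis. \<Sum>c\<in>Basis. \<beta> b c *\<^sub>R \<Phi> b c) = (\<Sum>y\<in>B. \<Sum>b\<in>Basis. \<beta> b y *\<^sub>R \<Phi> b y)"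
    unfolding inner by (rule sum.swap)
  also have "\<dots> = (\<Sum>x\<in>B. \<Sum>y\<in>B. \<beta> x y *\<^sub>R \<Phi> x y)"
    unfolding outer by (rule sum.swap)
  finally show ?thesis .
qed

lemma two_form_bilinear: "two_form \<eta> \<Longrightarrow> bilinear \<eta>"
  unfolding two_form_def bilinear_def by blast

lemma two_form_antisym: "two_form \<eta> \<Longrightarrow> \<eta> v u = - \<eta> u v"
  unfolding two_form_def by blast

lemma two_form_self: "two_form \<eta> \<Longrightarrow> \<eta> u u = 0"
  using two_form_antisym[of \<eta> u u] by simp

lemma scaleR_eq_smult_of_real: "r *\<^sub>R (v::complex^'n) = complex_of_real r *s v"
  unfolding vec_eq_iff by (simp add: complex_eq_iff)

lemma mat_vector_mult_eq_smult: "mat c *v (x::'a::semiring_1^'n) = c *s x"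
proof -
  have "(\<Sum>j\<in>UNIV. (if i = j then c else 0) * x $ j) = c * x $ i" for i
    by (simp add: if_distrib[where f="\<lambda>a. a * _"] cong: if_cong)
  then show ?thesis
    by (simp add: vec_eq_iff matrix_vector_mult_def mat_def)
qed

lemma sum_matrix_vector_mult: "sum A S *v x = (\<Sum>i\<in>S. A i *v x)"
  by (induction S rule: infinite_finite_induct) (simp_all add: matrix_vector_mult_add_rdistrib)

lemma matrix_vector_mult_uminus_right: "A *v (- x) = - (A *v (x::'a::real_algebra_1^'n))"
  using linear_neg[OF matrix_vector_mul_linear] .

lemma sum_signed_subset:
  fixes c :: "'a \<Rightarrow> 'b::ring_1"
  assumes "finite F" "P \<subseteq> F"
  shows "(\<Sum>f\<in>F. if f \<in> P then c f else - c f) = 2 * sum c P - sum c F"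
proof -
  have "sum c F = sum c P + sum c (F - P)"
    using assms by (metis add.commute sum.subset_diff)
  moreover have "(\<Sum>f\<in>F. if f \<in> P then c f else - c f) = sum c P - sum c (F - P)"
    using assms by (simp add: sum.If_cases Int_absorb1 Diff_eq sum_negf)
  ultimately show ?thesis
    by (simp add: mult_2 algebra_simps)
qed

lemma signed_sums_vanish_imp_zero:
  fixes d :: "'a \<Rightarrow> real"
  assumes F: "finite F" "card F = 2 * n" "n \<ge> 1"
    and vanish: "\<And>P. P \<subseteq> F \<Longrightarrow> card P = n \<or> card P = n - 1 \<Longrightarrow>
      (\<Sum>f\<in>F. if f \<in> P then d f else - d f) = 0"
    and f: "f \<in> F"
  shows "d f = 0"
proof -
  have half: "2 * sum d P = sum d F" if "P \<subseteq> F" "card P = n \<or> card P = n - 1" for P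
    using vanish[OF that] sum_signed_subset[OF F(1) that(1), of d] by simp
  have const: "d k = d f" if k: "k \<in> F" for k
  proof (cases "k = f")
    case False
    have "n - 1 \<le> card (F - {k, f})"
      using F k f False by (simp add: card_Diff_subset)
    then obtain Q where Q: "Q \<subseteq> F - {k, f}" "card Q = n - 1"
      by (meson obtain_subset_with_card_n)
    then have "finite Q" "k \<notin> Q" "f \<notin> Q"
      using F(1) finite_subset by auto
    then have "card (insert k Q) = n" "card (insert f Q) = n"
      using Q(2) F(3) by simp_all
    then have "2 * sum d (insert k Q) = 2 * sum d (insert f Q)"
      using half Q(1) k f by (metis Diff_subset insert_subset order_trans)
    then show ?thesis
      using \<open>finite Q\<close> \<open>k \<notin> Q\<close> \<open>f \<notin> Q\<close> by simp
  qed simp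
  obtain P where P: "P \<subseteq> F" "card P = n - 1"
    using F(2) by (metis obtain_subset_with_card_n diff_le_self le_add2 mult_2 order_trans)
  have "sum d P = real (n - 1) * d f" "sum d F = real (2 * n) * d f"
    using P F const finite_subset[OF P(1) F(1)] by (simp_all add: subsetD)
  then show ?thesis
    using half[OF P(1)] P(2) F(3) by (simp add: of_nat_diff algebra_simps)
qed


locale clifford_module =
  fixes \<gamma> :: "'v::euclidean_space \<Rightarrow> complex^'k^'k"
  assumes clifford: "clifford_rep \<gamma>"
begin

lemma gamma_linear: "linear (\<lambda>u. \<gamma> u *v \<psi>)"
proof (rule linearI)
  show "\<gamma> (u + w) *v \<psi> = \<gamma> u *v \<psi> + \<gamma> w *v \<psi>" for u w
    using clifford by (simp add: clifford_rep_def matrix_vector_mult_add_rdistrib)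
  show "\<gamma> (r *\<^sub>R u) *v \<psi> = r *\<^sub>R (\<gamma> u *v \<psi>)" for r u
    using clifford
    by (simp add: clifford_rep_def mat_vector_mult_eq_smult scaleR_eq_smult_of_real
        flip: matrix_vector_mul_assoc)
qed

lemma gamma_gamma_self: "\<gamma> u *v (\<gamma> u *v \<psi>) = - complex_of_real ((norm u)\<^sup>2) *s \<psi>"
  using clifford by (simp add: clifford_rep_def matrix_vector_mul_assoc mat_vector_mult_eq_smult)

lemma gamma_gamma_unit: "norm u = 1 \<Longrightarrow> \<gamma> u *v (\<gamma> u *v \<psi>) = - \<psi>"
  by (simp add: gamma_gamma_self vector_smult_lneg)

lemma gamma_anticommute:
  "\<gamma> u *v (\<gamma> w *v \<psi>) + \<gamma> w *v (\<gamma> u *v \<psi>) = - complex_of_real (2 * inner u w) *s \<psi>"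
proof -
  have add: "\<gamma> (u + w) *v \<phi> = \<gamma> u *v \<phi> + \<gamma> w *v \<phi>" for \<phi>
    using linear_add[OF gamma_linear] .
  have "(norm (u + w))\<^sup>2 = (norm u)\<^sup>2 + 2 * inner u w + (norm w)\<^sup>2"
    by (simp add: power2_norm_eq_inner inner_add_left inner_add_right inner_commute)
  then have "\<gamma> (u + w) *v (\<gamma> (u + w) *v \<psi>) = \<gamma> u *v (\<gamma> u *v \<psi>) + \<gamma> w *v (\<gamma> w *v \<psi>)
      - complex_of_real (2 * inner u w) *s \<psi>"
    by (simp add: gamma_gamma_self vec_eq_iff algebra_simps)
  then show ?thesis
    by (simp add: add matrix_vector_right_distrib algebra_simps eq_neg_iff_add_eq_0)
qed

lemma gamma_anticommute_orthogonal:
  "inner u w = 0 \<Longrightarrow> \<gamma> u *v (\<gamma> w *v \<psi>) = - (\<gamma> w *v (\<gamma> u *v \<psi>))"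
  using gamma_anticommute[of u w \<psi>] by (simp add: eq_neg_iff_add_eq_0)

lemma gamma_unit_nonzero: "norm u = 1 \<Longrightarrow> \<phi> \<noteq> 0 \<Longrightarrow> \<gamma> u *v \<phi> \<noteq> 0"
  by (metis gamma_gamma_unit matrix_vector_mult_0_right neg_0_equal_iff_equal)

end


section \<open>Unitary frames\<close>

locale almost_hermitian_space =
  fixes J :: "'v::euclidean_space \<Rightarrow> 'v"
  assumes almost_hermitian: "almost_hermitian J"
begin

lemma linear_J: "linear J"
  using almost_hermitian by (simp add: almost_hermitian_def)

lemma J_J [simp]: "J (J u) = - u"
  using almost_hermitian by (simp add: almost_hermitian_def)

lemma inner_J_J [simp]: "inner (J u) (J w) = inner u w"
  using almost_hermitian by (simp add: almost_hermitian_def)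

lemma inner_J_left: "inner (J u) w = - inner u (J w)"
  by (metis J_J inner_J_J inner_minus_left)

lemma inner_J_self [simp]: "inner u (J u) = 0"
  using inner_J_left[of u u] by (simp add: inner_commute)

lemma norm_J [simp]: "norm (J u) = norm u"
  by (simp add: norm_eq_sqrt_inner)

lemma inj_on_J: "inj_on J A"
  by (metis J_J inj_onI neg_equal_iff_equal)

lemma kaehler_form11: "form11 J (kaehler_form J)"
  unfolding form11_def two_form_def kaehler_form_def
proof (intro conjI allI)
  show "linear (\<lambda>v. inner u (J v))" for u
    using linear_J by (auto simp: linear_iff inner_add_right)
  show "linear (\<lambda>u. inner u (J v))" for v
    by (auto simp: linear_iff inner_add_left)
  show "inner u (J v) = - inner v (J u)" for u v
    using inner_J_left[of v u] by (simp add: inner_commute)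
qed (simp add: inner_J_left)

lemma form11_J_J: "form11 J \<eta> \<Longrightarrow> \<eta> (J u) (J v) = \<eta> u v"
  by (simp add: form11_def)

lemma form11_J_left: "form11 J \<eta> \<Longrightarrow> \<eta> (J u) v = - \<eta> u (J v)"
  using form11_J_J[of \<eta> "J u" v] two_form_bilinear[of \<eta>]
  by (simp add: form11_def bilinear_lneg)

text \<open>A unitary frame is an orthonormal family for the Hermitian metric \<open>g - \<i>\<Omega>\<close>.\<close>

definition unitary_frame :: "'v set \<Rightarrow> bool" where
  "unitary_frame F \<longleftrightarrow> finite F \<and> (\<forall>f\<in>F. norm f = 1) \<and>
     (\<forall>f\<in>F. \<forall>f'\<in>F. f \<noteq> f' \<longrightarrow> inner f f' = 0) \<and> (\<forall>f\<in>F. \<forall>f'\<in>F. inner f (J f') = 0)"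

lemma unitary_frame_exists:
  assumes "2 * k \<le> DIM('v)"
  shows "\<exists>F. unitary_frame F \<and> card F = k"
  using assms
proof (induction k)
  case 0
  have "unitary_frame {}"
    by (simp add: unitary_frame_def)
  then show ?case
    by force
next
  case (Suc k)
  then obtain F where F: "unitary_frame F" "card F = k"
    by auto
  have fin: "finite F"
    using F by (simp add: unitary_frame_def)
  have "dim (F \<union> J ` F) \<le> card (F \<union> J ` F)"
    using fin by (simp add: dim_le_card')
  also have "\<dots> \<le> card F + card (J ` F)"
    by (rule card_Un_le)
  also have "\<dots> < DIM('v)"
    using F Suc.prems card_image_le[OF fin, of J] by simp
  finally obtain x where x: "x \<noteq> 0" "\<And>y. y \<in> span (F \<union> J ` F) \<Longrightarrow> orthogonal x y"
    using orthogonal_to_subspace_exists by blast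
  define f where "f = x /\<^sub>R norm x"
  have f1: "norm f = 1"
    using x by (simp add: f_def)
  moreover have fg: "inner f g = 0" "inner f (J g) = 0" if "g \<in> F" for g
    using x(2)[OF span_base, of g] x(2)[OF span_base, of "J g"] that
    by (auto simp: f_def orthogonal_def)
  moreover have "inner g (J f) = 0" if "g \<in> F" for g
    using fg(2)[OF that] inner_J_left[of g f] by (simp add: inner_commute)
  ultimately have "unitary_frame (insert f F)"
    using F(1) fin unfolding unitary_frame_def by (simp add: inner_commute)
  moreover have "f \<notin> F"
    using fg(1) f1 by (metis inner_eq_zero_iff norm_zero zero_neq_one)
  ultimately show ?case
    using F fin by (metis card_insert_disjoint finite_insert)
qed

lemma unitary_frame_subset: "unitary_frame F \<Longrightarrow> G \<subseteq> F \<Longrightarrow> unitary_frame G"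
  by (auto simp: unitary_frame_def finite_subset subset_iff)

lemma unitary_frame_disjoint:
  assumes "unitary_frame F"
  shows "F \<inter> J ` F = {}"
  using assms by (force simp: unitary_frame_def)

lemma unitary_frame_orthonormal:
  assumes "unitary_frame F"
  shows "pairwise orthogonal (F \<union> J ` F)" "\<And>x. x \<in> F \<union> J ` F \<Longrightarrow> norm x = 1"
proof -
  have "inner x y = 0" if x: "x \<in> F \<union> J ` F" and y: "y \<in> F \<union> J ` F" and "x \<noteq> y" for x y
  proof -
    obtain f f' where "f \<in> F" "f' \<in> F" "x = f \<or> x = J f" "y = f' \<or> y = J f'"
      using x y by blast
    then show ?thesis
      using assms \<open>x \<noteq> y\<close> unfolding unitary_frame_def
      by (cases "f = f'") (auto simp: inner_J_left inner_commute)
  qed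
  then show "pairwise orthogonal (F \<union> J ` F)"
    by (simp add: pairwise_def orthogonal_def)
  show "norm x = 1" if "x \<in> F \<union> J ` F" for x
    using assms that by (auto simp: unitary_frame_def)
qed

lemma unitary_frame_span:
  assumes "unitary_frame F" "2 * card F = DIM('v)"
  shows "span (F \<union> J ` F) = UNIV"
proof -
  have fin: "finite F"
    using assms by (simp add: unitary_frame_def)
  have "independent (F \<union> J ` F)"
    using unitary_frame_orthonormal[OF assms(1)]
    by (metis norm_zero pairwise_orthogonal_independent zero_neq_one)
  moreover have "card (F \<union> J ` F) = DIM('v)"
    using assms(2) card_Un_disjoint[OF fin finite_imageI[OF fin] unitary_frame_disjoint[OF assms(1)]]
      card_image[OF inj_on_J] by simp
  ultimately show ?thesis
    using card_ge_dim_independent[of "F \<union> J ` F" UNIV] by (simp add: span_eq_iff[symmetric] order_eq_iff)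
qed

lemma form11_eq_zero_on_unitary_frame:
  assumes F: "unitary_frame F" "2 * card F = DIM('v)" and \<eta>: "form11 J \<eta>"
    and zero: "\<And>f f'. f \<in> F \<Longrightarrow> f' \<in> F \<Longrightarrow> \<eta> f f' = 0 \<and> \<eta> f (J f') = 0"
  shows "\<eta> = (\<lambda>u v. 0)"
proof -
  have on_frame: "\<eta> x y = 0" if "x \<in> F \<union> J ` F" "y \<in> F \<union> J ` F" for x y
    using that zero form11_J_left[OF \<eta>] form11_J_J[OF \<eta>] by auto
  have "bilinear \<eta>"
    using \<eta> by (simp add: form11_def two_form_bilinear)
  moreover have "bilinear (\<lambda>(u::'v) (v::'v). 0::real)"
    by (simp add: bilinear_def linear_zero)
  ultimately have "\<eta> u v = 0" for u v
    using bilinear_eq[of \<eta> "\<lambda>u v. 0" UNIV "F \<union> J ` F" UNIV "F \<union> J ` F"] on_frame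
      unitary_frame_span[OF F] by simp
  then show ?thesis
    by (intro ext)
qed

lemma sum_unitary_frame:
  assumes "unitary_frame F"
  shows "(\<Sum>x\<in>F \<union> J ` F. p x) = (\<Sum>f\<in>F. p f + p (J f))"
proof -
  have fin: "finite F"
    using assms by (simp add: unitary_frame_def)
  have "(\<Sum>x\<in>F \<union> J ` F. p x) = (\<Sum>f\<in>F. p f) + (\<Sum>x\<in>J ` F. p x)"
    using fin unitary_frame_disjoint[OF assms] by (simp add: sum.union_disjoint)
  also have "(\<Sum>x\<in>J ` F. p x) = (\<Sum>f\<in>F. p (J f))"
    using sum.reindex[OF inj_on_J] by simp
  finally show ?thesis
    by (simp add: sum.distrib)
qed

end


section \<open>Line operators and their joint eigenspaces\<close>

definition flip_sign :: "'a \<Rightarrow> ('a \<Rightarrow> complex) \<Rightarrow> 'a \<Rightarrow> complex" where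
  "flip_sign f \<sigma> = \<sigma>(f := - \<sigma> f)"

definition sign_pattern :: "'a set \<Rightarrow> 'a \<Rightarrow> complex" where
  "sign_pattern P f = (if f \<in> P then \<i> else - \<i>)"

locale hermitian_clifford_module = clifford_module \<gamma> + almost_hermitian_space J
  for \<gamma> :: "'v::euclidean_space \<Rightarrow> complex^'k^'k" and J :: "'v \<Rightarrow> 'v"
begin

text \<open>Clifford multiplication by \<open>f \<and> J f\<close>, the Kaehler form of the complex line \<open>\<complex> f\<close>.\<close>

definition line_op :: "'v \<Rightarrow> complex^'k^'k" where
  "line_op f = \<gamma> f ** \<gamma> (J f)"

lemma line_op_apply: "line_op f *v \<phi> = \<gamma> f *v (\<gamma> (J f) *v \<phi>)"
  by (simp add: line_op_def matrix_vector_mul_assoc)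

lemma line_op_gamma_orthogonal:
  assumes "inner x f = 0" "inner x (J f) = 0"
  shows "line_op f *v (\<gamma> x *v \<phi>) = \<gamma> x *v (line_op f *v \<phi>)"
  using assms
  by (simp add: line_op_apply gamma_anticommute_orthogonal matrix_vector_mult_uminus_right)

lemma line_op_gamma_own:
  assumes "norm f = 1" "x = f \<or> x = J f"
  shows "line_op f *v (\<gamma> x *v \<phi>) = - (\<gamma> x *v (line_op f *v \<phi>))"
proof -
  have "\<gamma> (J f) *v (\<gamma> f *v \<phi>) = - (\<gamma> f *v (\<gamma> (J f) *v \<phi>))" for \<phi>
    using gamma_anticommute_orthogonal[of "J f" f] by (simp add: inner_commute)
  then show ?thesis
    using assms by (auto simp: line_op_apply gamma_gamma_unit matrix_vector_mult_uminus_right)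
qed

lemma line_op_square: "norm f = 1 \<Longrightarrow> line_op f *v (line_op f *v \<phi>) = - \<phi>"
  using line_op_gamma_own[of f f "\<gamma> (J f) *v \<phi>"]
  by (simp add: line_op_apply gamma_gamma_unit matrix_vector_mult_uminus_right)

lemma gamma_J_eigenvector:
  assumes "norm f = 1" "line_op f *v \<phi> = s *s \<phi>"
  shows "\<gamma> (J f) *v \<phi> = - s *s (\<gamma> f *v \<phi>)"
proof -
  have "\<gamma> f *v (line_op f *v \<phi>) = - (\<gamma> (J f) *v \<phi>)"
    using assms(1) by (simp add: line_op_apply gamma_gamma_unit)
  then show ?thesis
    using assms(2) by (simp add: vector_scalar_commute vector_smult_lneg)
qed

definition joint_eigenspace :: "'v set \<Rightarrow> ('v \<Rightarrow> complex) \<Rightarrow> (complex^'k) set" where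
  "joint_eigenspace F \<sigma> = {\<phi>. \<forall>f\<in>F. line_op f *v \<phi> = \<sigma> f *s \<phi>}"

lemma subspace_joint_eigenspace: "vec.subspace (joint_eigenspace F \<sigma>)"
  by (auto simp: vec.subspace_def joint_eigenspace_def matrix_vector_right_distrib
      vector_scalar_commute vector_add_ldistrib mult.commute)

lemma gamma_joint_eigenspace_orthogonal:
  assumes "\<forall>f\<in>F. inner x f = 0 \<and> inner x (J f) = 0" "\<phi> \<in> joint_eigenspace F \<sigma>"
  shows "\<gamma> x *v \<phi> \<in> joint_eigenspace F \<sigma>"
  using assms by (simp add: joint_eigenspace_def line_op_gamma_orthogonal vector_scalar_commute)

lemma gamma_joint_eigenspace_flip:
  assumes F: "unitary_frame F" and "f \<in> F" "x = f \<or> x = J f" "\<phi> \<in> joint_eigenspace F \<sigma>"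
  shows "\<gamma> x *v \<phi> \<in> joint_eigenspace F (flip_sign f \<sigma>)"
  unfolding joint_eigenspace_def
proof (intro CollectI ballI)
  fix k assume "k \<in> F"
  show "line_op k *v (\<gamma> x *v \<phi>) = flip_sign f \<sigma> k *s (\<gamma> x *v \<phi>)"
  proof (cases "k = f")
    case True
    then show ?thesis
      using assms \<open>k \<in> F\<close> line_op_gamma_own[of k x \<phi>]
      by (auto simp: unitary_frame_def joint_eigenspace_def flip_sign_def vector_scalar_commute
          vector_smult_lneg)
  next
    case False
    then have "inner x k = 0 \<and> inner x (J k) = 0"
      using assms \<open>k \<in> F\<close> by (auto simp: unitary_frame_def inner_J_left)
    then show ?thesis
      using assms \<open>k \<in> F\<close> False line_op_gamma_orthogonal[of x k \<phi>]
      by (simp add: joint_eigenspace_def flip_sign_def vector_scalar_commute)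
  qed
qed

lemma joint_eigenspace_insert:
  "joint_eigenspace (insert g G) \<sigma> = {\<phi> \<in> joint_eigenspace G \<sigma>. line_op g *v \<phi> = \<sigma> g *s \<phi>}"
  by (auto simp: joint_eigenspace_def)

lemma joint_eigenspace_cong:
  "(\<And>f. f \<in> F \<Longrightarrow> \<sigma> f = \<tau> f) \<Longrightarrow> joint_eigenspace F \<sigma> = joint_eigenspace F \<tau>"
  by (simp add: joint_eigenspace_def)

lemma line_op_joint_eigenspace:
  assumes "unitary_frame (insert g G)" "g \<notin> G" "\<psi> \<in> joint_eigenspace G \<sigma>"
  shows "line_op g *v \<psi> \<in> joint_eigenspace G \<sigma>"
proof -
  have "\<forall>f\<in>G. inner x f = 0 \<and> inner x (J f) = 0" if "x = g \<or> x = J g" for x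
    using assms(1,2) that by (auto simp: unitary_frame_def inner_J_left)
  then show ?thesis
    using assms(3) by (simp add: line_op_apply gamma_joint_eigenspace_orthogonal)
qed

lemma joint_eigenspace_insert_nonzero:
  assumes frame: "unitary_frame (insert g G)" "g \<notin> G" and s: "\<sigma> g * \<sigma> g = -1"
    and \<psi>: "\<psi> \<noteq> 0" "\<psi> \<in> joint_eigenspace G \<sigma>"
  shows "\<exists>\<phi>. \<phi> \<noteq> 0 \<and> \<phi> \<in> joint_eigenspace (insert g G) \<sigma>"
proof -
  have g: "norm g = 1"
    using frame by (simp add: unitary_frame_def)
  text \<open>Since \<open>line_op g\<close> squares to \<open>-1\<close>, \<open>\<psi>\<close> splits into eigenvectors for \<open>\<sigma> g\<close> and \<open>-\<sigma> g\<close>.\<close>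
  define \<phi>_pos where "\<phi>_pos = \<psi> - \<sigma> g *s (line_op g *v \<psi>)"
  define \<phi>_neg where "\<phi>_neg = \<psi> + \<sigma> g *s (line_op g *v \<psi>)"
  have "\<phi>_pos \<in> joint_eigenspace G \<sigma>" "\<phi>_neg \<in> joint_eigenspace G \<sigma>"
    unfolding \<phi>_pos_def \<phi>_neg_def
    using \<psi>(2) line_op_joint_eigenspace[OF frame \<psi>(2)] subspace_joint_eigenspace
    by (simp_all add: vec.subspace_diff vec.subspace_add vec.subspace_scale)
  moreover have "line_op g *v \<phi>_pos = \<sigma> g *s \<phi>_pos" "line_op g *v \<phi>_neg = (- \<sigma> g) *s \<phi>_neg"
    unfolding \<phi>_pos_def \<phi>_neg_def
    by (simp_all add: line_op_square[OF g] matrix_vector_mult_diff_distrib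
        matrix_vector_right_distrib vector_scalar_commute s vector_smult_lneg)
  moreover have "joint_eigenspace G (flip_sign g \<sigma>) = joint_eigenspace G \<sigma>"
    using frame(2) by (intro joint_eigenspace_cong) (auto simp: flip_sign_def)
  ultimately have \<phi>: "\<phi>_pos \<in> joint_eigenspace (insert g G) \<sigma>"
    "\<phi>_neg \<in> joint_eigenspace (insert g G) (flip_sign g \<sigma>)"
    by (auto simp: joint_eigenspace_insert) (simp add: flip_sign_def)
  have "\<phi>_pos + \<phi>_neg = 2 *s \<psi>"
    by (simp add: \<phi>_pos_def \<phi>_neg_def vec_eq_iff)
  then consider "\<phi>_pos \<noteq> 0" | "\<phi>_neg \<noteq> 0"
    using \<psi>(1) by fastforce
  then show ?thesis
  proof cases
    case 1
    then show ?thesis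
      using \<phi>(1) by blast
  next
    case 2
    have "\<gamma> g *v \<phi>_neg \<in> joint_eigenspace (insert g G) (flip_sign g (flip_sign g \<sigma>))"
      using gamma_joint_eigenspace_flip[OF frame(1) _ _ \<phi>(2)] by simp
    moreover have "flip_sign g (flip_sign g \<sigma>) = \<sigma>"
      by (simp add: flip_sign_def)
    ultimately show ?thesis
      using gamma_unit_nonzero[OF g 2] by auto
  qed
qed

lemma joint_eigenvector_exists:
  assumes "unitary_frame F" "\<forall>f\<in>F. \<sigma> f = \<i> \<or> \<sigma> f = - \<i>"
  shows "\<exists>\<psi>. \<psi> \<noteq> 0 \<and> \<psi> \<in> joint_eigenspace F \<sigma>"
proof -
  have "finite F"
    using assms by (simp add: unitary_frame_def)
  then show ?thesis
    using assms
  proof (induction F rule: finite_induct)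
    case empty
    have "(1::complex^'k) \<noteq> 0"
      by (simp add: vec_eq_iff)
    then show ?case
      by (auto simp: joint_eigenspace_def)
  next
    case (insert g G)
    then obtain \<psi> where "\<psi> \<noteq> 0" "\<psi> \<in> joint_eigenspace G \<sigma>"
      using unitary_frame_subset[of "insert g G" G] by blast
    moreover have "\<sigma> g * \<sigma> g = -1"
      using insert.prems by auto
    ultimately show ?case
      using joint_eigenspace_insert_nonzero insert.hyps(2) insert.prems(1) by blast
  qed
qed


section \<open>Clifford multiplication by 2-forms in a unitary frame\<close>

definition cliff2_term :: "('v \<Rightarrow> 'v \<Rightarrow> real) \<Rightarrow> complex^'k \<Rightarrow> 'v \<Rightarrow> 'v \<Rightarrow> complex^'k" where
  "cliff2_term \<eta> \<psi> x y = complex_of_real (\<eta> x y / 2) *s (\<gamma> x *v (\<gamma> y *v \<psi>))"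

definition cliff2_block :: "('v \<Rightarrow> 'v \<Rightarrow> real) \<Rightarrow> complex^'k \<Rightarrow> 'v \<Rightarrow> 'v \<Rightarrow> complex^'k" where
  "cliff2_block \<eta> \<psi> f f' = cliff2_term \<eta> \<psi> f f' + cliff2_term \<eta> \<psi> f (J f') +
     cliff2_term \<eta> \<psi> (J f) f' + cliff2_term \<eta> \<psi> (J f) (J f')"

lemma bilinear_gamma_gamma: "bilinear (\<lambda>x y. \<gamma> x *v (\<gamma> y *v \<psi>))"
  unfolding bilinear_def
proof (intro allI conjI)
  show "linear (\<lambda>y. \<gamma> x *v (\<gamma> y *v \<psi>))" for x
    using linear_compose[OF gamma_linear matrix_vector_mul_linear] by (simp add: o_def)
qed (rule gamma_linear)

lemma cliff2_frame_expansion: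
  assumes F: "unitary_frame F" "2 * card F = DIM('v)" and \<eta>: "two_form \<eta>"
  shows "cliff2 \<gamma> \<eta> *v \<psi> = (\<Sum>f\<in>F. \<Sum>f'\<in>F. cliff2_block \<eta> \<psi> f f')"
proof -
  have half: "bilinear (\<lambda>x y. \<eta> x y / 2)"
    using two_form_bilinear[OF \<eta>] by (auto simp: bilinear_def linear_iff add_divide_distrib)
  have B: "finite (F \<union> J ` F)"
    using F(1) by (simp add: unitary_frame_def)
  have "cliff2 \<gamma> \<eta> *v \<psi> = (\<Sum>b\<in>Basis. \<Sum>c\<in>Basis. (\<eta> b c / 2) *\<^sub>R (\<gamma> b *v (\<gamma> c *v \<psi>)))"
    by (simp add: cliff2_def sum_matrix_vector_mult mat_vector_mult_eq_smult
        scaleR_eq_smult_of_real flip: matrix_vector_mul_assoc)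
  also have "\<dots> = (\<Sum>x\<in>F \<union> J ` F. \<Sum>y\<in>F \<union> J ` F. (\<eta> x y / 2) *\<^sub>R (\<gamma> x *v (\<gamma> y *v \<psi>)))"
    by (rule bilinear_contraction_orthonormal_basis[OF half bilinear_gamma_gamma B
          unitary_frame_orthonormal[OF F(1)] unitary_frame_span[OF F]])
  also have "\<dots> = (\<Sum>f\<in>F. \<Sum>f'\<in>F. cliff2_block \<eta> \<psi> f f')"
    by (simp add: sum_unitary_frame[OF F(1)] cliff2_block_def cliff2_term_def
        scaleR_eq_smult_of_real sum.distrib add.assoc)
  finally show ?thesis .
qed

lemma cliff2_term_swap:
  assumes "two_form \<eta>" "inner x y = 0"
  shows "cliff2_term \<eta> \<psi> y x = cliff2_term \<eta> \<psi> x y"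
  using assms
  by (simp add: cliff2_term_def two_form_antisym[of \<eta> x y] gamma_anticommute_orthogonal[of x y]
      inner_commute vector_smult_lneg)

lemma cliff2_block_swap:
  assumes "two_form \<eta>" "inner f f' = 0" "inner f (J f') = 0"
  shows "cliff2_block \<eta> \<psi> f' f = cliff2_block \<eta> \<psi> f f'"
proof -
  have "inner f' f = 0" "inner f' (J f) = 0" "inner (J f') f = 0" "inner (J f') (J f) = 0"
    using assms(2,3) inner_J_left[of f' f] by (simp_all add: inner_commute)
  note swap = this[THEN cliff2_term_swap[OF assms(1)]]
  show ?thesis
    unfolding cliff2_block_def swap by (simp add: algebra_simps)
qed

lemma cliff2_block_joint_eigenspace:
  assumes F: "unitary_frame F" and "f \<in> F" "f' \<in> F" and \<psi>: "\<psi> \<in> joint_eigenspace F \<sigma>"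
  shows "cliff2_block \<eta> \<psi> f f' \<in> joint_eigenspace F (flip_sign f (flip_sign f' \<sigma>))"
proof -
  have "\<gamma> x *v (\<gamma> y *v \<psi>) \<in> joint_eigenspace F (flip_sign f (flip_sign f' \<sigma>))"
    if "x = f \<or> x = J f" "y = f' \<or> y = J f'" for x y
    using gamma_joint_eigenspace_flip[OF F \<open>f \<in> F\<close> that(1)
        gamma_joint_eigenspace_flip[OF F \<open>f' \<in> F\<close> that(2) \<psi>]] .
  then show ?thesis
    unfolding cliff2_block_def cliff2_term_def
    using subspace_joint_eigenspace by (simp add: vec.subspace_add vec.subspace_scale)
qed

lemma line_op_product_eigenvector:
  assumes "k \<in> F" "l \<in> F" "\<phi> \<in> joint_eigenspace F \<tau>"
  shows "((line_op k - mat a) ** (line_op l - mat b)) *v \<phi> = ((\<tau> k - a) * (\<tau> l - b)) *s \<phi>"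
  using assms
  by (simp add: joint_eigenspace_def matrix_vector_mult_diff_rdistrib mat_vector_mult_eq_smult
      vector_scalar_commute vector_sub_rdistrib algebra_simps flip: matrix_vector_mul_assoc)

text \<open>The operator \<open>(line_op k - \<sigma> k)(line_op l - \<sigma> l)\<close> annihilates every block except the
  \<open>(k, l)\<close> and \<open>(l, k)\<close> blocks, because only these flip the signs at both \<open>k\<close> and \<open>l\<close>.\<close>

lemma cliff2_block_vanishes:
  assumes F: "unitary_frame F" "2 * card F = DIM('v)" and \<eta>: "two_form \<eta>"
    and \<psi>: "\<psi> \<in> joint_eigenspace F \<sigma>" "\<sigma> k \<noteq> 0" "\<sigma> l \<noteq> 0"
    and kl: "k \<in> F" "l \<in> F" "k \<noteq> l" and zero: "cliff2 \<gamma> \<eta> *v \<psi> = 0"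
  shows "cliff2_block \<eta> \<psi> k l = 0"
proof -
  define R where "R = (line_op k - mat (\<sigma> k)) ** (line_op l - mat (\<sigma> l))"
  define c where "c = 4 * \<sigma> k * \<sigma> l"
  have R_block: "R *v cliff2_block \<eta> \<psi> f f' =
      (if f = k \<and> f' = l \<or> f = l \<and> f' = k then c *s cliff2_block \<eta> \<psi> f f' else 0)"
    if "f \<in> F" "f' \<in> F" for f f'
    unfolding R_def
    using line_op_product_eigenvector[OF kl(1,2) cliff2_block_joint_eigenspace[OF F(1) that \<psi>(1)]] kl(3)
    by (auto simp: flip_sign_def c_def)
  have row: "(\<Sum>f'\<in>F. R *v cliff2_block \<eta> \<psi> f f') =
      (if f = k then c *s cliff2_block \<eta> \<psi> k l else 0) +
      (if f = l then c *s cliff2_block \<eta> \<psi> l k else 0)" if "f \<in> F" for f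
    using F(1) kl that by (auto simp: R_block unitary_frame_def cong: sum.cong)
  have "0 = R *v (cliff2 \<gamma> \<eta> *v \<psi>)"
    using zero by simp
  also have "\<dots> = (\<Sum>f\<in>F. \<Sum>f'\<in>F. R *v cliff2_block \<eta> \<psi> f f')"
    by (simp add: cliff2_frame_expansion[OF F \<eta>] vec.sum)
  also have "\<dots> = c *s cliff2_block \<eta> \<psi> k l + c *s cliff2_block \<eta> \<psi> l k"
    using F(1) kl by (simp add: row sum.distrib unitary_frame_def cong: sum.cong)
  also have "\<dots> = (2 * c) *s cliff2_block \<eta> \<psi> k l"
    using F(1) kl \<eta> cliff2_block_swap[of \<eta> k l \<psi>]
    by (simp add: unitary_frame_def vec_eq_iff algebra_simps)
  finally show ?thesis
    using \<psi>(2,3) by (simp add: c_def)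
qed

lemma cliff2_block_opposite_signs:
  assumes F: "unitary_frame F" and \<eta>: "form11 J \<eta>" and \<psi>: "\<psi> \<in> joint_eigenspace F \<sigma>"
    and kl: "k \<in> F" "l \<in> F" "k \<noteq> l" and \<sigma>: "\<sigma> k = \<i>" "\<sigma> l = - \<i>"
  shows "cliff2_block \<eta> \<psi> k l =
    (complex_of_real (\<eta> k l) + \<i> * complex_of_real (\<eta> k (J l))) *s (\<gamma> k *v (\<gamma> l *v \<psi>))"
proof -
  have unit: "norm k = 1" "norm l = 1"
    using F kl by (auto simp: unitary_frame_def)
  have "\<gamma> l *v \<psi> \<in> joint_eigenspace F (flip_sign l \<sigma>)"
    using gamma_joint_eigenspace_flip[OF F kl(2) _ \<psi>] by simp
  then have "line_op k *v (\<gamma> l *v \<psi>) = \<i> *s (\<gamma> l *v \<psi>)"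
    using kl \<sigma> by (simp add: joint_eigenspace_def flip_sign_def)
  then have Jk: "\<gamma> (J k) *v (\<gamma> l *v \<psi>) = - \<i> *s (\<gamma> k *v (\<gamma> l *v \<psi>))"
    by (rule gamma_J_eigenvector[OF unit(1)])
  have Jl: "\<gamma> (J l) *v \<psi> = \<i> *s (\<gamma> l *v \<psi>)"
    using gamma_J_eigenvector[OF unit(2), of \<psi> "- \<i>"] \<psi> kl \<sigma>
    by (simp add: joint_eigenspace_def)
  show ?thesis
    using form11_J_left[OF \<eta>, of k l] form11_J_J[OF \<eta>, of k l]
    by (simp add: cliff2_block_def cliff2_term_def Jk Jl vector_scalar_commute vec_eq_iff
        algebra_simps)
qed

lemma cliff2_block_diagonal:
  assumes \<eta>: "form11 J \<eta>" and "\<psi> \<in> joint_eigenspace F \<sigma>" "f \<in> F"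
  shows "cliff2_block \<eta> \<psi> f f = (complex_of_real (\<eta> f (J f)) * \<sigma> f) *s \<psi>"
proof -
  have two: "two_form \<eta>"
    using \<eta> by (simp add: form11_def)
  have "\<gamma> (J f) *v (\<gamma> f *v \<psi>) = - (line_op f *v \<psi>)"
    using gamma_anticommute_orthogonal[of "J f" f \<psi>] by (simp add: line_op_apply inner_commute)
  then show ?thesis
    using assms two_form_self[OF two] two_form_antisym[OF two, of f "J f"]
    by (simp add: cliff2_block_def cliff2_term_def line_op_apply[symmetric] joint_eigenspace_def
        vec_eq_iff algebra_simps)
qed

lemma cliff2_diagonal:
  assumes F: "unitary_frame F" "2 * card F = DIM('v)" and \<eta>: "form11 J \<eta>"
    and off: "\<And>f f'. f \<in> F \<Longrightarrow> f' \<in> F \<Longrightarrow> f \<noteq> f' \<Longrightarrow> \<eta> f f' = 0 \<and> \<eta> f (J f') = 0"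
    and \<psi>: "\<psi> \<in> joint_eigenspace F \<sigma>"
  shows "cliff2 \<gamma> \<eta> *v \<psi> = (\<Sum>f\<in>F. complex_of_real (\<eta> f (J f)) * \<sigma> f) *s \<psi>"
proof -
  have two: "two_form \<eta>"
    using \<eta> by (simp add: form11_def)
  have off_block: "cliff2_block \<eta> \<psi> f f' = 0" if "f \<in> F" "f' \<in> F" "f \<noteq> f'" for f f'
    using off[OF that] form11_J_left[OF \<eta>, of f f'] form11_J_J[OF \<eta>, of f f']
    by (simp add: cliff2_block_def cliff2_term_def)
  have "(\<Sum>f'\<in>F. cliff2_block \<eta> \<psi> f f') = (complex_of_real (\<eta> f (J f)) * \<sigma> f) *s \<psi>"
    if "f \<in> F" for f
  proof -
    have "finite F"
      using F(1) by (simp add: unitary_frame_def)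
    then have "(\<Sum>f'\<in>F. cliff2_block \<eta> \<psi> f f') =
        cliff2_block \<eta> \<psi> f f + (\<Sum>f'\<in>F - {f}. cliff2_block \<eta> \<psi> f f')"
      using that by (rule sum.remove)
    also have "(\<Sum>f'\<in>F - {f}. cliff2_block \<eta> \<psi> f f') = 0"
      using off_block that by (intro sum.neutral) auto
    finally show ?thesis
      using cliff2_block_diagonal[OF \<eta> \<psi> that] by simp
  qed
  then have "cliff2 \<gamma> \<eta> *v \<psi> = (\<Sum>f\<in>F. (complex_of_real (\<eta> f (J f)) * \<sigma> f) *s \<psi>)"
    by (simp add: cliff2_frame_expansion[OF F two])
  then show ?thesis
    by (simp add: vec.scale_sum_left)
qed

lemma cliff2_annihilates_opposite_pair:
  assumes F: "unitary_frame F" "2 * card F = DIM('v)" and \<eta>: "form11 J \<eta>"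
    and \<psi>: "\<psi> \<noteq> 0" "\<psi> \<in> joint_eigenspace F \<sigma>" and kl: "k \<in> F" "l \<in> F" "k \<noteq> l"
    and \<sigma>: "\<sigma> k = \<i>" "\<sigma> l = - \<i>" and zero: "cliff2 \<gamma> \<eta> *v \<psi> = 0"
  shows "\<eta> k l = 0 \<and> \<eta> k (J l) = 0"
proof -
  have "norm k = 1" "norm l = 1"
    using F(1) kl by (auto simp: unitary_frame_def)
  then have "\<gamma> k *v (\<gamma> l *v \<psi>) \<noteq> 0"
    using \<psi>(1) by (simp add: gamma_unit_nonzero)
  moreover have "cliff2_block \<eta> \<psi> k l = 0"
    using \<eta> \<sigma> by (intro cliff2_block_vanishes[OF F _ \<psi>(2) _ _ kl zero]) (simp_all add: form11_def)
  ultimately have "complex_of_real (\<eta> k l) + \<i> * complex_of_real (\<eta> k (J l)) = 0"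
    using cliff2_block_opposite_signs[OF F(1) \<eta> \<psi>(2) kl \<sigma>] vector_mul_eq_0 by metis
  then show ?thesis
    by (simp add: complex_eq_iff)
qed

lemma joint_eigenspace_subset_spinor_S:
  assumes F: "unitary_frame F" "2 * card F = DIM('v)" and P: "P \<subseteq> F"
  shows "joint_eigenspace F (sign_pattern P) \<subseteq> spinor_S \<gamma> J (card F) (card P)"
proof
  fix \<psi> assume \<psi>: "\<psi> \<in> joint_eigenspace F (sign_pattern P)"
  have fin: "finite F"
    using F(1) by (simp add: unitary_frame_def)
  have "kaehler_form J f f' = 0 \<and> kaehler_form J f (J f') = 0"
    if "f \<in> F" "f' \<in> F" "f \<noteq> f'" for f f'
    using F(1) that by (simp add: unitary_frame_def kaehler_form_def)
  then have "cliff2 \<gamma> (kaehler_form J) *v \<psi> =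
      (\<Sum>f\<in>F. complex_of_real (kaehler_form J f (J f)) * sign_pattern P f) *s \<psi>"
    by (rule cliff2_diagonal[OF F kaehler_form11 _ \<psi>])
  also have "(\<Sum>f\<in>F. complex_of_real (kaehler_form J f (J f)) * sign_pattern P f) =
      - (\<Sum>f\<in>F. if f \<in> P then \<i> else - \<i>)"
    using F(1) by (simp add: kaehler_form_def sign_pattern_def unitary_frame_def
        power2_norm_eq_inner[symmetric] sum_negf[symmetric] cong: sum.cong)
  also have "(\<Sum>f\<in>F. if f \<in> P then \<i> else - \<i>) = 2 * (of_nat (card P) * \<i>) - of_nat (card F) * \<i>"
    using sum_signed_subset[OF fin P, of "\<lambda>_. \<i>"] by simp
  finally show "\<psi> \<in> spinor_S \<gamma> J (card F) (card P)"
    by (simp add: spinor_S_def algebra_simps)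
qed

lemma form11_eq_zero_if_cliff2_annihilates_middle:
  assumes F: "unitary_frame F" "card F = 2 * n" "2 * card F = DIM('v)" and n: "n \<ge> 1"
    and \<eta>: "form11 J \<eta>"
    and annihilated: "\<And>P \<psi>. P \<subseteq> F \<Longrightarrow> card P = n \<or> card P = n - 1 \<Longrightarrow>
      \<psi> \<in> joint_eigenspace F (sign_pattern P) \<Longrightarrow> cliff2 \<gamma> \<eta> *v \<psi> = 0"
  shows "\<eta> = (\<lambda>u v. 0)"
proof -
  have fin: "finite F"
    using F(1) by (simp add: unitary_frame_def)
  have eigenvector: "\<exists>\<psi>. \<psi> \<noteq> 0 \<and> \<psi> \<in> joint_eigenspace F (sign_pattern P)" for P
    using joint_eigenvector_exists[OF F(1)] by (simp add: sign_pattern_def)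
  have off: "\<eta> k l = 0 \<and> \<eta> k (J l) = 0" if kl: "k \<in> F" "l \<in> F" "k \<noteq> l" for k l
  proof -
    have "n - 1 \<le> card (F - {k, l})"
      using F(2) fin kl by (simp add: card_Diff_subset)
    then obtain Q where Q: "Q \<subseteq> F - {k, l}" "card Q = n - 1"
      by (meson obtain_subset_with_card_n)
    moreover have "finite Q" "k \<notin> Q"
      using Q(1) fin finite_subset by auto
    ultimately have P: "insert k Q \<subseteq> F" "card (insert k Q) = n"
      using kl n by auto
    obtain \<psi> where \<psi>: "\<psi> \<noteq> 0" "\<psi> \<in> joint_eigenspace F (sign_pattern (insert k Q))"
      using eigenvector by blast
    show ?thesis
      using Q(1) kl(3) annihilated[OF P(1) _ \<psi>(2)] P(2)
      by (intro cliff2_annihilates_opposite_pair[OF F(1,3) \<eta> \<psi> kl]) (auto simp: sign_pattern_def)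
  qed
  have diag: "\<eta> f (J f) = 0" if "f \<in> F" for f
  proof (rule signed_sums_vanish_imp_zero[OF fin F(2) n _ that])
    fix P assume P: "P \<subseteq> F" "card P = n \<or> card P = n - 1"
    obtain \<psi> where \<psi>: "\<psi> \<noteq> 0" "\<psi> \<in> joint_eigenspace F (sign_pattern P)"
      using eigenvector by blast
    have "(\<Sum>f\<in>F. complex_of_real (\<eta> f (J f)) * sign_pattern P f) *s \<psi> = 0"
      using cliff2_diagonal[OF F(1,3) \<eta> _ \<psi>(2)] off annihilated[OF P \<psi>(2)] by simp
    then have "(\<Sum>f\<in>F. complex_of_real (\<eta> f (J f)) * sign_pattern P f) = 0"
      using \<psi>(1) by simp
    moreover have "(\<Sum>f\<in>F. complex_of_real (\<eta> f (J f)) * sign_pattern P f) =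
        \<i> * complex_of_real (\<Sum>f\<in>F. if f \<in> P then \<eta> f (J f) else - \<eta> f (J f))"
      by (simp add: sign_pattern_def sum_distrib_left if_distrib mult.commute cong: if_cong)
    ultimately show "(\<Sum>f\<in>F. if f \<in> P then \<eta> f (J f) else - \<eta> f (J f)) = 0"
      by (simp del: of_real_sum)
  qed
  have "two_form \<eta>"
    using \<eta> by (simp add: form11_def)
  then show ?thesis
    using form11_eq_zero_on_unitary_frame[OF F(1,3) \<eta>] off diag two_form_self by metis
qed

end

theorem mainTheorem11:
  fixes J :: "'v::euclidean_space \<Rightarrow> 'v"
    and \<gamma> :: "'v \<Rightarrow> complex^'k^'k"
    and n :: nat
    and \<eta> :: "'v \<Rightarrow> 'v \<Rightarrow> real"
  assumes "n \<ge> 1"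
    and "DIM('v) = 2 * (2 * n)"
    and "almost_hermitian J"
    and "spinor_rep \<gamma>"
    and "form11 J \<eta>"
    and "\<forall>\<phi> \<in> {a + b | a b. a \<in> spinor_S \<gamma> J (2 * n) (n - 1) \<and> b \<in> spinor_S \<gamma> J (2 * n) n}.
           cliff2 \<gamma> \<eta> *v \<phi> = 0"
  shows "\<eta> = (\<lambda>u v. 0)"
proof -
  interpret hermitian_clifford_module \<gamma> J
    using assms(3,4) by unfold_locales (simp_all add: spinor_rep_def)
  obtain F where F: "unitary_frame F" "card F = 2 * n"
    using unitary_frame_exists[of "2 * n"] assms(2) by auto
  have spanning: "2 * card F = DIM('v)"
    using F(2) assms(2) by simp
  show ?thesis
  proof (rule form11_eq_zero_if_cliff2_annihilates_middle[OF F spanning assms(1,5)])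
    fix P \<psi> assume P: "P \<subseteq> F" "card P = n \<or> card P = n - 1"
      and \<psi>: "\<psi> \<in> joint_eigenspace F (sign_pattern P)"
    have "\<psi> \<in> spinor_S \<gamma> J (2 * n) (card P)"
      using joint_eigenspace_subset_spinor_S[OF F(1) spanning P(1)] \<psi> F(2) by auto
    moreover have "0 \<in> spinor_S \<gamma> J (2 * n) j" for j
      by (simp add: spinor_S_def)
    ultimately have "\<psi> \<in> {a + b | a b. a \<in> spinor_S \<gamma> J (2 * n) (n - 1) \<and> b \<in> spinor_S \<gamma> J (2 * n) n}"
      using P(2) by (metis (mono_tags, lifting) add_0 add.right_neutral mem_Collect_eq)
    then show "cliff2 \<gamma> \<eta> *v \<psi> = 0"
      using assms(6) by blast
  qed
qed

end
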